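(* Let $\Gamma$ be a finitely generated group and for $i=1,2$ let $\mathbb{F}_i$ be a free group on a finite basis $X_i$ and $\pi_i:\mathbb{F}_i\twoheadrightarrow\Gamma$ an epimorphism. If $\Gamma$ is stable with respect to $\pi_1$, then it is stable with respect to $\pi_2$. Moreover there exists $C_0\ge 1$ such that for all $x\ge1$: (i) if $\pi_1$ is an isomorphism then $F_\Gamma^{\pi_2}(x)\le C_0x$; (ii) if $\pi_1$ is not an isomorphism then $F_\Gamma^{\pi_2}(x)\le C_0F_\Gamma^{\pi_1}(C_0x)$.
   Context: For a finite set $\Omega$, $d_\Omega(\sigma,\tau)=|\{\omega:\sigma(\omega)\ne\tau(\omega)\}|/|\Omega|$. For an epimorphism $\pi:\mathbb{F}\twoheadrightarrow\Gamma$ from a free group on finite basis $X$ and $\epsilon>0$, a pair $(\delta,E)$ with $\delta\in(0,1]$, $E\subseteq\ker\pi$ finite, is valid for $\epsilon$ if for every finite $\Omega$ and every homomorphism $\rho:\mathbb{F}\to\mathrm{Sym}(\Omega)$ with $d_\Omega(\rho(r),\mathrm{id})<\delta$ for all $r\in E$, there is a homomorphism $\phi:\Gamma\to\mathrm{Sym}(\Omega)$ with $d_\Omega(\rho(x),\phi(\pi(x)))<\epsilon$ for all $x\in X$. $\Gamma$ is stable w.r.t. $\pi$ if valid pairs exist for all $\epsilon>0$. $F_\Gamma^\pi(x)=\inf\{\|E\|/\delta:(\delta,E)\text{ valid for }1/x\}$, where $\|E\|=\sum_{r\in E}|r|$ with word length in $X$. *)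

theory Defs
  imports Complex_Main "HOL-Algebra.Bij"
begin

text \<open>Elements of the free group on a basis X are represented by reduced words:
  lists of letters (b, x), x in X, where (True, x) stands for x and (False, x) for x^-1,
  with no adjacent pair (b,x),(\<not>b,x).\<close>

fun reduced :: "(bool \<times> 'x) list \<Rightarrow> bool" where
  "reduced [] = True"
| "reduced [_] = True"
| "reduced ((b, x) # (c, y) # w) = (\<not> (x = y \<and> b \<noteq> c) \<and> reduced ((c, y) # w))"

definition free_elems :: "'x set \<Rightarrow> (bool \<times> 'x) list set" where
  "free_elems X = {w. set (map snd w) \<subseteq> X \<and> reduced w}"

fun word_eval :: "('g, 'm) monoid_scheme \<Rightarrow> ('x \<Rightarrow> 'g) \<Rightarrow> (bool \<times> 'x) list \<Rightarrow> 'g" where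
  "word_eval G f [] = \<one>\<^bsub>G\<^esub>"
| "word_eval G f ((b, x) # w) =
     (if b then f x else inv\<^bsub>G\<^esub> (f x)) \<otimes>\<^bsub>G\<^esub> word_eval G f w"

definition is_epi :: "('g, 'm) monoid_scheme \<Rightarrow> 'x set \<Rightarrow> ('x \<Rightarrow> 'g) \<Rightarrow> bool" where
  "is_epi G X f \<longleftrightarrow> f ` X \<subseteq> carrier G \<and>
     (\<forall>g \<in> carrier G. \<exists>w \<in> free_elems X. word_eval G f w = g)"

definition is_iso :: "('g, 'm) monoid_scheme \<Rightarrow> 'x set \<Rightarrow> ('x \<Rightarrow> 'g) \<Rightarrow> bool" where
  "is_iso G X f \<longleftrightarrow> is_epi G X f \<and>
     (\<forall>w \<in> free_elems X. word_eval G f w = \<one>\<^bsub>G\<^esub> \<longrightarrow> w = [])"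

definition ker_free :: "('g, 'm) monoid_scheme \<Rightarrow> 'x set \<Rightarrow> ('x \<Rightarrow> 'g) \<Rightarrow> (bool \<times> 'x) list set" where
  "ker_free G X f = {w \<in> free_elems X. word_eval G f w = \<one>\<^bsub>G\<^esub>}"

definition dist_Om :: "'a set \<Rightarrow> ('a \<Rightarrow> 'a) \<Rightarrow> ('a \<Rightarrow> 'a) \<Rightarrow> real" where
  "dist_Om \<Omega> \<sigma> \<tau> = real (card {\<omega> \<in> \<Omega>. \<sigma> \<omega> \<noteq> \<tau> \<omega>}) / real (card \<Omega>)"

definition word_norm :: "(bool \<times> 'x) list set \<Rightarrow> nat" where
  "word_norm E = (\<Sum>r \<in> E. length r)"

text \<open>Finite sets Omega are taken as finite sets of natural numbers (every finite set
  is in bijection with one). A homomorphism rho : F(X) -> Sym(Omega) is given by an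
  assignment of permutations to the basis.\<close>
definition valid_pair :: "('g, 'm) monoid_scheme \<Rightarrow> 'x set \<Rightarrow> ('x \<Rightarrow> 'g) \<Rightarrow> real
    \<Rightarrow> real \<Rightarrow> (bool \<times> 'x) list set \<Rightarrow> bool" where
  "valid_pair G X f \<epsilon> \<delta> E \<longleftrightarrow>
     0 < \<delta> \<and> \<delta> \<le> 1 \<and> finite E \<and> E \<subseteq> ker_free G X f \<and>
     (\<forall>(\<Omega> :: nat set) (\<rho> :: 'x \<Rightarrow> nat \<Rightarrow> nat).
        finite \<Omega> \<longrightarrow> (\<forall>x \<in> X. \<rho> x \<in> Bij \<Omega>) \<longrightarrow>
        (\<forall>r \<in> E. dist_Om \<Omega> (word_eval (BijGroup \<Omega>) \<rho> r) id < \<delta>) \<longrightarrow>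
        (\<exists>\<phi> \<in> hom G (BijGroup \<Omega>). \<forall>x \<in> X. dist_Om \<Omega> (\<rho> x) (\<phi> (f x)) < \<epsilon>))"

definition stable_wrt :: "('g, 'm) monoid_scheme \<Rightarrow> 'x set \<Rightarrow> ('x \<Rightarrow> 'g) \<Rightarrow> bool" where
  "stable_wrt G X f \<longleftrightarrow> (\<forall>\<epsilon> > 0. \<exists>\<delta> E. valid_pair G X f \<epsilon> \<delta> E)"

definition stab_fun :: "('g, 'm) monoid_scheme \<Rightarrow> 'x set \<Rightarrow> ('x \<Rightarrow> 'g) \<Rightarrow> real \<Rightarrow> real" where
  "stab_fun G X f x = Inf {real (word_norm E) / \<delta> | \<delta> E. valid_pair G X f (1 / x) \<delta> E}"

end

(*
  Both epimorphisms are onto the same group, so every generator in X1 is the image of a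
  word in X2 and vice versa.  A finite relator set E for the first presentation is
  translated into one for the second (a Tietze transformation): substitute these words
  into E and add, for each x in X2, the relator expressing that x equals its rewriting.
  If rho is an almost-representation for the new relators, pulling it back along the
  substitution gives an almost-representation for E, hence a nearby homomorphism phi;
  the added relators then make rho itself close to phi.  The new relators have total
  length at most L * |E| + K for constants L and K, which yields stability and bounds
  the second stability function by the first, once K is absorbed.

  If the first epimorphism is an isomorphism, the universal property of free groups
  makes (1, {}) valid for every epsilon, so only the added relators count.  Otherwise a
  nontrivial reduced relator w0 gives an action on about 1/epsilon points in which w0
  acts nontrivially along a path of |w0| + 1 points and every word moves only points of
  that path.  No homomorphism is epsilon-close to this action, so every valid pair has
  delta = O(epsilon) and a nonempty E, which absorbs the constant K.
*)

theory Submission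
  imports Defs "HOL-Combinatorics.Permutations"
begin

section \<open>Free reduction and substitution of words\<close>

definition word_inv :: "(bool \<times> 'x) list \<Rightarrow> (bool \<times> 'x) list" where
  "word_inv v = rev (map (\<lambda>(b, x). (\<not> b, x)) v)"

fun cancel_cons :: "bool \<times> 'x \<Rightarrow> (bool \<times> 'x) list \<Rightarrow> (bool \<times> 'x) list" where
  "cancel_cons a [] = [a]"
| "cancel_cons (b, x) ((c, y) # v) = (if x = y \<and> b \<noteq> c then v else (b, x) # (c, y) # v)"

fun reduce :: "(bool \<times> 'x) list \<Rightarrow> (bool \<times> 'x) list" where
  "reduce [] = []"
| "reduce (a # v) = cancel_cons a (reduce v)"

definition word_subst :: "('a \<Rightarrow> (bool \<times> 'b) list) \<Rightarrow> (bool \<times> 'a) list \<Rightarrow> (bool \<times> 'b) list" where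
  "word_subst s v = concat (map (\<lambda>(b, x). if b then s x else word_inv (s x)) v)"

lemma reduced_tl: "reduced (a # v) \<Longrightarrow> reduced v"
  by (cases a; cases v) auto

lemma reduced_cancel_cons: "reduced v \<Longrightarrow> reduced (cancel_cons a v)"
  by (induction a v rule: cancel_cons.induct) (auto dest: reduced_tl)

lemma reduced_reduce: "reduced (reduce v)"
  by (induction v) (auto intro: reduced_cancel_cons)

lemma reduced_nth_Suc:
  "reduced w \<Longrightarrow> Suc k < length w \<Longrightarrow> snd (w ! k) = snd (w ! Suc k) \<Longrightarrow> fst (w ! k) = fst (w ! Suc k)"
proof (induction w arbitrary: k rule: reduced.induct)
  case (3 b x c y w)
  then show ?case by (cases k) auto
qed auto

lemma length_cancel_cons: "length (cancel_cons a v) \<le> Suc (length v)"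
  by (induction a v rule: cancel_cons.induct) auto

lemma length_reduce: "length (reduce v) \<le> length v"
  by (induction v) (auto intro: order_trans[OF length_cancel_cons])

lemma set_cancel_cons: "set (cancel_cons a v) \<subseteq> insert a (set v)"
  by (induction a v rule: cancel_cons.induct) auto

lemma set_reduce: "set (reduce v) \<subseteq> set v"
  by (induction v) (use set_cancel_cons in fastforce)+

lemma snd_set_word_inv [simp]: "snd ` set (word_inv v) = snd ` set v"
  by (force simp: word_inv_def)

lemma word_subst_Nil [simp]: "word_subst s [] = []"
  by (simp add: word_subst_def)

lemma word_subst_Cons [simp]:
  "word_subst s ((b, x) # v) = (if b then s x else word_inv (s x)) @ word_subst s v"
  by (simp add: word_subst_def)

lemma snd_set_word_subst: "snd ` set (word_subst s v) = (\<Union>a \<in> set v. snd ` set (s (snd a)))"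
proof (induction v)
  case (Cons a v)
  then show ?case by (cases a) (simp add: image_Un)
qed simp

lemma length_word_subst: "length (word_subst s v) = (\<Sum>a \<leftarrow> v. length (s (snd a)))"
  by (induction v) (auto simp: word_inv_def)

lemma length_word_subst_le:
  assumes "\<forall>a \<in> set v. length (s (snd a)) \<le> L"
  shows "length (word_subst s v) \<le> length v * L"
proof -
  have "(\<Sum>a \<leftarrow> v. length (s (snd a))) \<le> (\<Sum>a \<leftarrow> v. L)"
    by (rule sum_list_mono) (use assms in auto)
  then show ?thesis by (simp add: length_word_subst sum_list_triv)
qed

lemma word_eval_cong:
  "(\<And>a. a \<in> set v \<Longrightarrow> f (snd a) = g (snd a)) \<Longrightarrow> word_eval G f v = word_eval G g v"
  by (induction v) fastforce+

lemma free_elems_letters: "v \<in> free_elems X \<Longrightarrow> snd ` set v \<subseteq> X"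
  by (simp add: free_elems_def)

lemma reduce_in_free_elems: "snd ` set v \<subseteq> X \<Longrightarrow> reduce v \<in> free_elems X"
  using set_reduce reduced_reduce by (fastforce simp: free_elems_def)

lemma is_epi_closed: "is_epi G X f \<Longrightarrow> f ` X \<subseteq> carrier G"
  by (simp add: is_epi_def)

definition preimage_word :: "('g, 'm) monoid_scheme \<Rightarrow> 'x set \<Rightarrow> ('x \<Rightarrow> 'g) \<Rightarrow> 'g \<Rightarrow> (bool \<times> 'x) list"
  where "preimage_word G X f g = (SOME v. v \<in> free_elems X \<and> word_eval G f v = g)"

lemma preimage_word:
  assumes "is_epi G X f" "g \<in> carrier G"
  shows "snd ` set (preimage_word G X f g) \<subseteq> X \<and> word_eval G f (preimage_word G X f g) = g"
proof -
  have "\<exists>v. v \<in> free_elems X \<and> word_eval G f v = g" using assms by (auto simp: is_epi_def)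
  from someI_ex[OF this] show ?thesis unfolding preimage_word_def by (simp add: free_elems_letters)
qed

context group
begin

lemma word_eval_closed: "f ` snd ` set v \<subseteq> carrier G \<Longrightarrow> word_eval G f v \<in> carrier G"
  by (induction v) auto

lemma word_eval_append:
  "f ` snd ` set v \<subseteq> carrier G \<Longrightarrow> f ` snd ` set w \<subseteq> carrier G \<Longrightarrow>
   word_eval G f (v @ w) = word_eval G f v \<otimes> word_eval G f w"
  by (induction v) (auto simp: m_assoc word_eval_closed)

lemma word_eval_word_inv:
  "f ` snd ` set v \<subseteq> carrier G \<Longrightarrow> word_eval G f (word_inv v) = inv (word_eval G f v)"
proof (induction v)
  case (Cons a v)
  obtain b x where a: "a = (b, x)" by force
  have "word_inv (a # v) = word_inv v @ [(\<not> b, x)]" by (simp add: word_inv_def a)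
  then show ?case
    using Cons by (simp add: a word_eval_append word_eval_closed inv_mult_group)
qed (simp add: word_inv_def)

lemma word_eval_cancel_cons:
  "f ` snd ` set (a # v) \<subseteq> carrier G \<Longrightarrow> word_eval G f (cancel_cons a v) = word_eval G f (a # v)"
  by (induction a v rule: cancel_cons.induct) (auto simp: m_assoc[symmetric] word_eval_closed)

lemma word_eval_reduce: "f ` snd ` set v \<subseteq> carrier G \<Longrightarrow> word_eval G f (reduce v) = word_eval G f v"
proof (induction v)
  case (Cons a v)
  then have "f ` snd ` set (a # reduce v) \<subseteq> carrier G" using set_reduce by fastforce
  with Cons show ?case by (cases a) (simp add: word_eval_cancel_cons)
qed simp

lemma word_eval_word_subst:
  "\<forall>x \<in> snd ` set v. f ` snd ` set (s x) \<subseteq> carrier G \<Longrightarrow>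
   word_eval G f (word_subst s v) = word_eval G (\<lambda>x. word_eval G f (s x)) v"
proof (induction v)
  case (Cons a v)
  moreover have "f ` snd ` set (word_subst s v) \<subseteq> carrier G"
  proof -
    have "\<forall>x \<in> snd ` set v. f ` snd ` set (s x) \<subseteq> carrier G" using Cons.prems by simp
    then show ?thesis by (simp add: snd_set_word_subst image_UN UN_subset_iff)
  qed
  ultimately show ?case
    by (cases a) (simp add: word_eval_append word_eval_word_inv)
qed simp

end

lemma (in group_hom) word_eval_hom:
  "f ` snd ` set v \<subseteq> carrier G \<Longrightarrow> word_eval H (\<lambda>x. h (f x)) v = h (word_eval G f v)"
  by (induction v) (auto simp: G.word_eval_closed)

section \<open>Hamming distance between permutations\<close>

lemma carrier_BijGroup [simp]: "carrier (BijGroup S) = Bij S"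
  by (simp add: BijGroup_def)

lemma mult_BijGroup: "\<sigma> \<in> Bij S \<Longrightarrow> \<tau> \<in> Bij S \<Longrightarrow> \<sigma> \<otimes>\<^bsub>BijGroup S\<^esub> \<tau> = compose S \<sigma> \<tau>"
  by (simp add: BijGroup_def)

lemma one_BijGroup: "\<one>\<^bsub>BijGroup S\<^esub> = (\<lambda>x \<in> S. x)"
  by (simp add: BijGroup_def)

lemma Bij_inv_into_eq_iff:
  "\<sigma> \<in> Bij S \<Longrightarrow> u \<in> S \<Longrightarrow> v \<in> S \<Longrightarrow> inv_into S \<sigma> u = v \<longleftrightarrow> \<sigma> v = u"
  unfolding Bij_def using bij_betw_inv_into_left bij_betw_inv_into_right by fastforce

lemma card_Bij_preimage:
  assumes "finite S" "\<beta> \<in> Bij S"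
  shows "card {w \<in> S. P (\<beta> w)} = card {w \<in> S. P w}"
proof -
  have \<beta>: "bij_betw \<beta> S S" using assms by (simp add: Bij_def)
  then have "\<beta> ` {w \<in> S. P (\<beta> w)} = {w \<in> S. P w}"
    by (auto simp: bij_betw_def)
  moreover have "inj_on \<beta> {w \<in> S. P (\<beta> w)}"
    using \<beta> by (auto simp: bij_betw_def intro: inj_on_subset)
  ultimately show ?thesis using card_image[of \<beta> "{w \<in> S. P (\<beta> w)}"] by simp
qed

lemma dist_Om_triangle: "finite S \<Longrightarrow> dist_Om S \<sigma> \<upsilon> \<le> dist_Om S \<sigma> \<tau> + dist_Om S \<tau> \<upsilon>"
proof -
  assume "finite S"
  have "card {w \<in> S. \<sigma> w \<noteq> \<upsilon> w} \<le> card ({w \<in> S. \<sigma> w \<noteq> \<tau> w} \<union> {w \<in> S. \<tau> w \<noteq> \<upsilon> w})"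
    by (rule card_mono) (use \<open>finite S\<close> in auto)
  also have "\<dots> \<le> card {w \<in> S. \<sigma> w \<noteq> \<tau> w} + card {w \<in> S. \<tau> w \<noteq> \<upsilon> w}"
    by (rule card_Un_le)
  finally show ?thesis
    unfolding dist_Om_def by (simp add: divide_right_mono flip: add_divide_distrib)
qed

lemma dist_Om_compose:
  assumes "finite S" "\<tau>' \<in> Bij S"
  shows "dist_Om S (compose S \<sigma> \<tau>) (compose S \<sigma>' \<tau>') \<le> dist_Om S \<sigma> \<sigma>' + dist_Om S \<tau> \<tau>'"
proof -
  have "card {w \<in> S. compose S \<sigma> \<tau> w \<noteq> compose S \<sigma>' \<tau>' w}
      \<le> card ({w \<in> S. \<sigma> (\<tau>' w) \<noteq> \<sigma>' (\<tau>' w)} \<union> {w \<in> S. \<tau> w \<noteq> \<tau>' w})"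
    by (rule card_mono) (use assms in \<open>auto simp: compose_def\<close>)
  also have "\<dots> \<le> card {w \<in> S. \<sigma> (\<tau>' w) \<noteq> \<sigma>' (\<tau>' w)} + card {w \<in> S. \<tau> w \<noteq> \<tau>' w}"
    by (rule card_Un_le)
  also have "card {w \<in> S. \<sigma> (\<tau>' w) \<noteq> \<sigma>' (\<tau>' w)} = card {w \<in> S. \<sigma> w \<noteq> \<sigma>' w}"
    by (rule card_Bij_preimage[OF assms])
  finally show ?thesis
    unfolding dist_Om_def by (simp add: divide_right_mono flip: add_divide_distrib)
qed

lemma dist_Om_inv:
  assumes "finite S" "\<sigma> \<in> Bij S" "\<tau> \<in> Bij S"
  shows "dist_Om S (inv\<^bsub>BijGroup S\<^esub> \<sigma>) (inv\<^bsub>BijGroup S\<^esub> \<tau>) = dist_Om S \<sigma> \<tau>"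
proof -
  have \<tau>S: "\<tau> w \<in> S" if "w \<in> S" for w using assms that Bij_imp_funcset by blast
  have "inv_into S \<tau> (\<tau> w) = w" "inv_into S \<sigma> (\<tau> w) = w \<longleftrightarrow> \<sigma> w = \<tau> w" if "w \<in> S" for w
    using Bij_inv_into_eq_iff[OF assms(2)] Bij_inv_into_eq_iff[OF assms(3)] \<tau>S that by blast+
  then have "{w \<in> S. inv_into S \<sigma> (\<tau> w) \<noteq> inv_into S \<tau> (\<tau> w)} = {w \<in> S. \<sigma> w \<noteq> \<tau> w}"
    by auto
  then show ?thesis
    using card_Bij_preimage[OF assms(1,3), of "\<lambda>u. inv_into S \<sigma> u \<noteq> inv_into S \<tau> u"]
    by (simp add: dist_Om_def inv_BijGroup assms \<tau>S cong: conj_cong)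
qed

lemma dist_Om_inv_mult_id:
  assumes "\<sigma> \<in> Bij S" "\<tau> \<in> Bij S"
  shows "dist_Om S (inv\<^bsub>BijGroup S\<^esub> \<sigma> \<otimes>\<^bsub>BijGroup S\<^esub> \<tau>) id = dist_Om S \<sigma> \<tau>"
proof -
  have \<tau>S: "\<tau> w \<in> S" if "w \<in> S" for w using assms that Bij_imp_funcset by blast
  then have "{w \<in> S. inv_into S \<sigma> (\<tau> w) \<noteq> w} = {w \<in> S. \<sigma> w \<noteq> \<tau> w}"
    using Bij_inv_into_eq_iff[OF assms(1)] by auto
  moreover have "inv\<^bsub>BijGroup S\<^esub> \<sigma> \<in> Bij S"
    using group.inv_closed[OF group_BijGroup] assms by (metis carrier_BijGroup)
  ultimately show ?thesis
    by (simp add: dist_Om_def mult_BijGroup compose_def inv_BijGroup assms \<tau>S cong: conj_cong)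
qed

lemma dist_Om_word_eval:
  assumes "finite S" "\<rho> ` snd ` set v \<subseteq> Bij S" "\<psi> ` snd ` set v \<subseteq> Bij S"
  shows "dist_Om S (word_eval (BijGroup S) \<rho> v) (word_eval (BijGroup S) \<psi> v)
     \<le> (\<Sum>a \<leftarrow> v. dist_Om S (\<rho> (snd a)) (\<psi> (snd a)))"
  using assms(2,3)
proof (induction v)
  case Nil
  then show ?case by (simp add: dist_Om_def)
next
  case (Cons a v)
  interpret B: group "BijGroup S" by (rule group_BijGroup)
  obtain b x where a: "a = (b, x)" by force
  define g where "g \<rho> = (if b then \<rho> x else inv\<^bsub>BijGroup S\<^esub> (\<rho> x))" for \<rho> :: "_ \<Rightarrow> _ \<Rightarrow> _"
  have "dist_Om S (g \<rho>) (g \<psi>) = dist_Om S (\<rho> x) (\<psi> x)"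
    unfolding g_def using dist_Om_inv[OF assms(1)] Cons.prems a by auto
  moreover have "word_eval (BijGroup S) \<rho> v \<in> Bij S" "word_eval (BijGroup S) \<psi> v \<in> Bij S"
    using Cons.prems B.word_eval_closed[of \<rho> v] B.word_eval_closed[of \<psi> v] by auto
  moreover have "g \<rho> \<in> Bij S" "g \<psi> \<in> Bij S"
    unfolding g_def using Cons.prems a B.inv_closed by auto
  moreover have "word_eval (BijGroup S) \<phi> (a # v) = compose S (g \<phi>) (word_eval (BijGroup S) \<phi> v)"
    if "g \<phi> \<in> Bij S" "word_eval (BijGroup S) \<phi> v \<in> Bij S" for \<phi>
    using that by (simp add: a g_def mult_BijGroup)
  ultimately have "dist_Om S (word_eval (BijGroup S) \<rho> (a # v)) (word_eval (BijGroup S) \<psi> (a # v))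
      \<le> dist_Om S (\<rho> x) (\<psi> x) + dist_Om S (word_eval (BijGroup S) \<rho> v) (word_eval (BijGroup S) \<psi> v)"
    using dist_Om_compose[OF assms(1)] by (metis (no_types))
  then show ?case
    using Cons by (simp add: a)
qed

lemma dist_Om_word_eval_hom:
  assumes "finite S" "group G" "\<phi> \<in> hom G (BijGroup S)"
    and "f ` snd ` set v \<subseteq> carrier G" "\<rho> ` snd ` set v \<subseteq> Bij S"
    and "\<forall>x \<in> snd ` set v. dist_Om S (\<rho> x) (\<phi> (f x)) \<le> \<epsilon>"
  shows "dist_Om S (word_eval (BijGroup S) \<rho> v) (\<phi> (word_eval G f v)) \<le> real (length v) * \<epsilon>"
proof -
  have \<phi>: "group_hom G (BijGroup S) \<phi>"
    using assms(2,3) group_BijGroup by (simp add: group_hom_def group_hom_axioms_def)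
  have "\<phi> ` f ` snd ` set v \<subseteq> Bij S"
    using assms(3,4) by (auto simp: hom_def)
  then have "dist_Om S (word_eval (BijGroup S) \<rho> v) (word_eval (BijGroup S) (\<lambda>x. \<phi> (f x)) v)
      \<le> (\<Sum>a \<leftarrow> v. dist_Om S (\<rho> (snd a)) (\<phi> (f (snd a))))"
    using dist_Om_word_eval[OF assms(1,5)] by (simp add: image_image)
  also have "\<dots> \<le> (\<Sum>a \<leftarrow> v. \<epsilon>)"
    using assms(6) by (intro sum_list_mono) simp
  finally show ?thesis
    using group_hom.word_eval_hom[OF \<phi> assms(4)] by (simp add: sum_list_triv)
qed

lemma permutation_extending_inj_on:
  assumes S: "finite S" and D: "D \<subseteq> S" and p: "inj_on p D" "p ` D \<subseteq> S"
  shows "\<exists>\<sigma>. \<sigma> permutes S \<and> (\<forall>d \<in> D. \<sigma> d = p d)"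
proof -
  have "finite D" using S D finite_subset by blast
  then have "card (S - D) = card (S - p ` D)"
    using D p by (simp add: card_Diff_subset card_image)
  then obtain g where g: "bij_betw g (S - D) (S - p ` D)"
    using bij_betw_iff_card[of "S - D" "S - p ` D"] S by auto
  define \<sigma> where "\<sigma> i = (if i \<in> D then p i else if i \<in> S then g i else i)" for i
  have "bij_betw \<sigma> D (p ` D)"
    using inj_on_imp_bij_betw[OF p(1)] by (rule bij_betw_cong[THEN iffD1, rotated]) (simp add: \<sigma>_def)
  moreover have "bij_betw \<sigma> (S - D) (S - p ` D)"
    using g by (rule bij_betw_cong[THEN iffD1, rotated]) (simp add: \<sigma>_def)
  ultimately have "bij_betw \<sigma> (D \<union> (S - D)) (p ` D \<union> (S - p ` D))"
    by (rule bij_betw_combine) blast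
  moreover have "D \<union> (S - D) = S" "p ` D \<union> (S - p ` D) = S" using D p(2) by auto
  ultimately have "bij_betw \<sigma> S S" by simp
  then have "\<sigma> permutes S"
    by (rule bij_imp_permutes) (use D in \<open>auto simp: \<sigma>_def\<close>)
  then show ?thesis by (auto simp: \<sigma>_def)
qed

lemma restrict_permutes_Bij: "\<sigma> permutes S \<Longrightarrow> restrict \<sigma> S \<in> Bij S"
  unfolding Bij_def by (auto intro: bij_betw_cong[THEN iffD1, OF _ permutes_imp_bij])

lemma word_eval_BijGroup_fixed:
  assumes "\<rho> ` snd ` set r \<subseteq> Bij S" "\<forall>x \<in> snd ` set r. \<rho> x i = i" "i \<in> S"
  shows "word_eval (BijGroup S) \<rho> r i = i"
  using assms(1,2)
proof (induction r)
  case (Cons a r)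
  interpret B: group "BijGroup S" by (rule group_BijGroup)
  obtain b x where a: "a = (b, x)" by force
  define g where "g = (if b then \<rho> x else inv\<^bsub>BijGroup S\<^esub> (\<rho> x))"
  have x: "\<rho> x \<in> Bij S" "\<rho> x i = i" using Cons.prems by (simp_all add: a)
  moreover have "inv_into S (\<rho> x) i = i" using Bij_inv_into_eq_iff[OF x(1) assms(3,3)] x(2) by blast
  ultimately have "g \<in> Bij S" "g i = i"
    unfolding g_def using B.inv_closed assms(3) by (auto simp: inv_BijGroup)
  moreover have "word_eval (BijGroup S) \<rho> r \<in> Bij S" "word_eval (BijGroup S) \<rho> r i = i"
    using Cons B.word_eval_closed[of \<rho> r] by auto
  ultimately show ?case
    using assms(3) by (simp add: a g_def[symmetric] mult_BijGroup compose_def)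
qed (simp add: one_BijGroup assms(3))

lemma dist_Om_less_inverse_card:
  assumes "finite S" "\<sigma> \<in> Bij S" "\<tau> \<in> Bij S" "dist_Om S \<sigma> \<tau> < 1 / real (card S)"
  shows "\<sigma> = \<tau>"
proof -
  have "card S \<noteq> 0" using assms(4) by (rule contrapos_pn) (simp add: dist_Om_def)
  then have "card {w \<in> S. \<sigma> w \<noteq> \<tau> w} = 0"
    using assms(4) by (simp add: dist_Om_def divide_less_cancel)
  then have "\<forall>w \<in> S. \<sigma> w = \<tau> w" using assms(1) by auto
  then show ?thesis
    using assms(2,3) by (intro extensionalityI[of _ S]) (auto simp: Bij_def)
qed

section \<open>Valid pairs and the stability function\<close>

lemma word_norm_relator_set_le:
  assumes "finite E" "\<forall>r \<in> E. length (g r) \<le> c r"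
  shows "word_norm (g ` E) \<le> (\<Sum>r \<in> E. c r)"
proof -
  have "word_norm (g ` E) \<le> (\<Sum>r \<in> E. length (g r))"
    unfolding word_norm_def using sum_image_le[OF assms(1), of length g] by (simp add: o_def)
  also have "\<dots> \<le> (\<Sum>r \<in> E. c r)" using assms(2) by (intro sum_mono) simp
  finally show ?thesis .
qed

lemma valid_pair_free_elems: "valid_pair G X f \<epsilon> \<delta> E \<Longrightarrow> E \<subseteq> free_elems X"
  by (auto simp: valid_pair_def ker_free_def)

lemma stab_fun_le:
  assumes "valid_pair G X f (1 / x) \<delta> E"
  shows "stab_fun G X f x \<le> real (word_norm E) / \<delta>"
  unfolding stab_fun_def
proof (rule cInf_lower)
  show "bdd_below {real (word_norm E) / \<delta> | \<delta> E. valid_pair G X f (1 / x) \<delta> E}"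
    by (rule bdd_belowI[of _ 0]) (auto simp: valid_pair_def)
qed (use assms in blast)

lemma le_stab_fun:
  assumes "\<exists>\<delta> E. valid_pair G X f (1 / x) \<delta> E"
    and "\<And>\<delta> E. valid_pair G X f (1 / x) \<delta> E \<Longrightarrow> c \<le> real (word_norm E) / \<delta>"
  shows "c \<le> stab_fun G X f x"
  unfolding stab_fun_def using assms by (intro cInf_greatest) auto

section \<open>Free presentations\<close>

lemma is_iso_reduce_eq_Nil:
  assumes "group G" "is_iso G X f" "snd ` set v \<subseteq> X" "word_eval G f v = \<one>\<^bsub>G\<^esub>"
  shows "reduce v = []"
proof -
  have "f ` snd ` set v \<subseteq> carrier G"
    using assms(2,3) by (auto simp: is_iso_def is_epi_def)
  then have "word_eval G f (reduce v) = \<one>\<^bsub>G\<^esub>"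
    using group.word_eval_reduce[OF assms(1)] assms(4) by metis
  then show ?thesis
    using assms(2) reduce_in_free_elems[OF assms(3)] by (simp add: is_iso_def)
qed

lemma is_iso_word_eval_eq:
  assumes G: "group G" and iso: "is_iso G X f" and H: "group H" and h: "h ` X \<subseteq> carrier H"
    and v: "snd ` set v \<subseteq> X" "snd ` set v' \<subseteq> X"
    and eq: "word_eval G f v = word_eval G f v'"
  shows "word_eval H h v = word_eval H h v'"
proof -
  interpret G: group G by (rule G)
  interpret H: group H by (rule H)
  have f: "f ` X \<subseteq> carrier G" using iso by (simp add: is_iso_def is_epi_def)
  have v'': "snd ` set (word_inv v @ v') \<subseteq> X" using v by (simp add: image_Un)
  have "f ` snd ` set v \<subseteq> carrier G" "f ` snd ` set v' \<subseteq> carrier G" using v f by blast+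
  then have "word_eval G f (word_inv v @ v') = \<one>\<^bsub>G\<^esub>"
    using eq by (simp add: G.word_eval_append G.word_eval_word_inv G.word_eval_closed)
  then have "reduce (word_inv v @ v') = []" by (rule is_iso_reduce_eq_Nil[OF G iso v''])
  moreover have hv: "h ` snd ` set v \<subseteq> carrier H" "h ` snd ` set v' \<subseteq> carrier H"
    using v h by blast+
  ultimately have "word_eval H h (word_inv v @ v') = \<one>\<^bsub>H\<^esub>"
    using H.word_eval_reduce[of h "word_inv v @ v'"] by (simp add: image_Un)
  then have "inv\<^bsub>H\<^esub> (word_eval H h v) \<otimes>\<^bsub>H\<^esub> word_eval H h v' = \<one>\<^bsub>H\<^esub>"
    using hv by (simp add: H.word_eval_append H.word_eval_word_inv)
  then show ?thesis
    using hv by (simp add: H.inv_solve_left' H.word_eval_closed)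
qed

lemma is_iso_hom_extension:
  assumes G: "group G" and iso: "is_iso G X f" and H: "group H" and h: "h ` X \<subseteq> carrier H"
  shows "\<exists>\<phi> \<in> hom G H. \<forall>x \<in> X. \<phi> (f x) = h x"
proof -
  interpret G: group G by (rule G)
  interpret H: group H by (rule H)
  have f: "f ` X \<subseteq> carrier G" using iso by (simp add: is_iso_def is_epi_def)
  define W where "W g = preimage_word G X f g" for g
  have W: "snd ` set (W g) \<subseteq> X \<and> word_eval G f (W g) = g" if "g \<in> carrier G" for g
    unfolding W_def using iso that by (intro preimage_word) (simp_all add: is_iso_def)
  define \<phi> where "\<phi> g = word_eval H h (W g)" for g
  have \<phi>_word: "\<phi> (word_eval G f v) = word_eval H h v" if v: "snd ` set v \<subseteq> X" for v
  proof -
    have "word_eval G f v \<in> carrier G"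
      using v f by (meson G.word_eval_closed image_mono subset_trans)
    then show ?thesis
      unfolding \<phi>_def using W v by (blast intro: is_iso_word_eval_eq[OF G iso H h])
  qed
  have "\<phi> \<in> hom G H"
  proof (rule homI)
    fix g assume "g \<in> carrier G"
    then show "\<phi> g \<in> carrier H"
      unfolding \<phi>_def using W h by (meson H.word_eval_closed image_mono subset_trans)
  next
    fix g g' assume gg': "g \<in> carrier G" "g' \<in> carrier G"
    moreover have "f ` snd ` set (W g) \<subseteq> carrier G" "f ` snd ` set (W g') \<subseteq> carrier G"
      using W[OF gg'(1)] W[OF gg'(2)] f by blast+
    ultimately have "g \<otimes>\<^bsub>G\<^esub> g' = word_eval G f (W g @ W g')"
      using W by (simp add: G.word_eval_append)
    moreover have "h ` snd ` set (W g) \<subseteq> carrier H" "h ` snd ` set (W g') \<subseteq> carrier H"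
      using W[OF gg'(1)] W[OF gg'(2)] h by blast+
    ultimately show "\<phi> (g \<otimes>\<^bsub>G\<^esub> g') = \<phi> g \<otimes>\<^bsub>H\<^esub> \<phi> g'"
      using W[OF gg'(1)] W[OF gg'(2)] \<phi>_word[of "W g @ W g'"]
      by (simp add: \<phi>_def H.word_eval_append image_Un)
  qed
  moreover have "\<phi> (f x) = h x" if "x \<in> X" for x
    using \<phi>_word[of "[(True, x)]"] that f h by (auto simp: image_subset_iff)
  ultimately show ?thesis by blast
qed

lemma valid_pair_of_is_iso:
  assumes "group G" "is_iso G X f" "0 < \<epsilon>"
  shows "valid_pair G X f \<epsilon> 1 {}"
  unfolding valid_pair_def
proof (intro conjI allI impI)
  fix \<Omega> :: "nat set" and \<rho> :: "_ \<Rightarrow> nat \<Rightarrow> nat"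
  assume "\<forall>x \<in> X. \<rho> x \<in> Bij \<Omega>"
  then have "\<rho> ` X \<subseteq> carrier (BijGroup \<Omega>)" by auto
  then obtain \<phi> where "\<phi> \<in> hom G (BijGroup \<Omega>)" "\<forall>x \<in> X. \<phi> (f x) = \<rho> x"
    using is_iso_hom_extension[OF assms(1,2) group_BijGroup] by blast
  then show "\<exists>\<phi> \<in> hom G (BijGroup \<Omega>). \<forall>x \<in> X. dist_Om \<Omega> (\<rho> x) (\<phi> (f x)) < \<epsilon>"
    using assms(3) by (intro bexI[of _ \<phi>]) (auto simp: dist_Om_def)
qed auto

section \<open>A permutation action along a nontrivial relator\<close>

text \<open>The k-th letter of \<open>w0\<close>, read as a permutation of the path \<open>{..n}\<close>, maps \<open>k + 1\<close>
  to \<open>k\<close>, so \<open>w0\<close> maps \<open>n\<close> to \<open>0\<close>.  Reducedness of \<open>w0\<close> makes the prescribed partial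
  maps of each generator injective.\<close>

locale reduced_path =
  fixes w0 :: "(bool \<times> 'x) list" and N :: nat
  assumes reduced_w0: "reduced w0" and length_less: "length w0 < N"
begin

abbreviation n where "n \<equiv> length w0"

definition pos :: "'x \<Rightarrow> nat set" where "pos x = {k. k < n \<and> w0 ! k = (True, x)}"
definition neg :: "'x \<Rightarrow> nat set" where "neg x = {k. k < n \<and> w0 ! k = (False, x)}"

definition moves :: "'x \<Rightarrow> nat set" where "moves x = Suc ` pos x \<union> neg x"
definition move :: "'x \<Rightarrow> nat \<Rightarrow> nat" where "move x i = (if i \<in> Suc ` pos x then i - 1 else Suc i)"

lemma neg_Suc_pos: "k \<in> neg x \<Longrightarrow> Suc k \<in> pos x \<Longrightarrow> False"
  using reduced_nth_Suc[OF reduced_w0, of k] by (auto simp: pos_def neg_def)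

lemma neg_not_Suc_pos: "k \<in> neg x \<Longrightarrow> k \<notin> Suc ` pos x"
  using reduced_nth_Suc[OF reduced_w0] by (fastforce simp: pos_def neg_def)

lemma inj_on_move: "inj_on (move x) (moves x)"
proof (rule inj_onI)
  fix i j assume "i \<in> moves x" "j \<in> moves x" and eq: "move x i = move x j"
  then consider "i \<in> Suc ` pos x" "j \<in> Suc ` pos x" | "i \<in> neg x" "j \<in> neg x"
    | "i \<in> Suc ` pos x" "j \<in> neg x" | "i \<in> neg x" "j \<in> Suc ` pos x"
    by (auto simp: moves_def)
  then show "i = j"
  proof cases
    case 3
    then have "Suc j \<in> pos x" using eq neg_not_Suc_pos by (auto simp: move_def)
    then show ?thesis using 3 neg_Suc_pos by blast
  next
    case 4
    then have "Suc i \<in> pos x" using eq neg_not_Suc_pos by (auto simp: move_def)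
    then show ?thesis using 4 neg_Suc_pos by blast
  qed (use eq neg_not_Suc_pos in \<open>auto simp: move_def\<close>)
qed

lemma moves_subset: "moves x \<subseteq> {..n}"
  by (auto simp: moves_def pos_def neg_def)

lemma move_moves_subset: "move x ` moves x \<subseteq> {..n}"
  by (auto simp: moves_def pos_def neg_def move_def)

definition perm :: "'x \<Rightarrow> nat \<Rightarrow> nat" where
  "perm x = (SOME \<sigma>. \<sigma> permutes {..n} \<and> (\<forall>i \<in> moves x. \<sigma> i = move x i))"

lemma perm: "perm x permutes {..n} \<and> (\<forall>i \<in> moves x. perm x i = move x i)"
proof -
  have "\<exists>\<sigma>. \<sigma> permutes {..n} \<and> (\<forall>i \<in> moves x. \<sigma> i = move x i)"
    using permutation_extending_inj_on[OF _ moves_subset inj_on_move move_moves_subset] by simp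
  then show ?thesis unfolding perm_def by (rule someI_ex)
qed

abbreviation \<Omega> where "\<Omega> \<equiv> {..<N}"

definition rho :: "'x \<Rightarrow> nat \<Rightarrow> nat" where "rho x = restrict (perm x) \<Omega>"

lemma rho_Bij: "rho x \<in> Bij \<Omega>"
proof -
  have "{..n} \<subseteq> \<Omega>" using length_less by auto
  then have "perm x permutes \<Omega>" using permutes_subset perm by blast
  then show ?thesis unfolding rho_def by (rule restrict_permutes_Bij)
qed

lemma rho_Bij_image [simp]: "rho ` A \<subseteq> Bij \<Omega>"
  using rho_Bij by blast

lemma rho_fixed: "n < i \<Longrightarrow> i < N \<Longrightarrow> rho x i = i"
  using permutes_not_in[of "perm x" "{..n}" i] perm by (simp add: rho_def)

lemma dist_Om_word_eval_rho: "dist_Om \<Omega> (word_eval (BijGroup \<Omega>) rho r) id \<le> real (Suc n) / real N"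
proof -
  have "word_eval (BijGroup \<Omega>) rho r i = i" if "i \<in> \<Omega>" "n < i" for i
    using that rho_fixed by (intro word_eval_BijGroup_fixed) auto
  then have "{i \<in> \<Omega>. word_eval (BijGroup \<Omega>) rho r i \<noteq> id i} \<subseteq> {..n}"
    by (auto intro: leI)
  then have "card {i \<in> \<Omega>. word_eval (BijGroup \<Omega>) rho r i \<noteq> id i} \<le> Suc n"
    using card_mono[of "{..n}"] by fastforce
  then show ?thesis unfolding dist_Om_def by (simp add: divide_right_mono)
qed

lemma letter_maps_Suc:
  assumes "k < n" "w0 ! k = (b, x)"
  shows "(if b then rho x else inv\<^bsub>BijGroup \<Omega>\<^esub> (rho x)) (Suc k) = k"
proof (cases b)
  case True
  then have "Suc k \<in> moves x" "Suc k \<in> Suc ` pos x" using assms by (auto simp: moves_def pos_def)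
  then show ?thesis using True perm[of x] assms length_less by (simp add: rho_def move_def)
next
  case False
  then have "k \<in> moves x" "k \<in> neg x" using assms by (auto simp: moves_def neg_def)
  then have "rho x k = Suc k"
    using perm[of x] neg_not_Suc_pos assms length_less by (simp add: rho_def move_def)
  then have "inv_into \<Omega> (rho x) (Suc k) = k"
    using Bij_inv_into_eq_iff[OF rho_Bij] assms length_less by simp
  then show ?thesis using False assms length_less by (simp add: inv_BijGroup rho_Bij)
qed

lemma word_eval_drop_rho: "k \<le> n \<Longrightarrow> word_eval (BijGroup \<Omega>) rho (drop k w0) n = k"
proof (induction k rule: inc_induct)
  case base
  then show ?case using length_less by (simp add: one_BijGroup)
next
  case (step k)
  interpret B: group "BijGroup \<Omega>" by (rule group_BijGroup)
  obtain b x where a: "w0 ! k = (b, x)" by force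
  have "drop k w0 = (b, x) # drop (Suc k) w0" using Cons_nth_drop_Suc[of k w0] step a by simp
  moreover have "word_eval (BijGroup \<Omega>) rho (drop (Suc k) w0) \<in> Bij \<Omega>"
    using B.word_eval_closed[of rho "drop (Suc k) w0"] by simp
  moreover have "inv\<^bsub>BijGroup \<Omega>\<^esub> (rho x) \<in> Bij \<Omega>" using B.inv_closed rho_Bij by simp
  ultimately show ?case
    using step letter_maps_Suc[OF _ a] rho_Bij[of x] length_less
    by (cases b) (auto simp: mult_BijGroup compose_def)
qed

lemma not_close_to_hom:
  assumes "group G" "f ` snd ` set w0 \<subseteq> carrier G" "word_eval G f w0 = \<one>\<^bsub>G\<^esub>" "w0 \<noteq> []"
    and "\<phi> \<in> hom G (BijGroup \<Omega>)"
  shows "\<exists>x \<in> snd ` set w0. 1 / real N \<le> dist_Om \<Omega> (rho x) (\<phi> (f x))"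
proof (rule ccontr)
  have \<phi>: "group_hom G (BijGroup \<Omega>) \<phi>"
    using assms(1,5) group_BijGroup by (simp add: group_hom_def group_hom_axioms_def)
  assume "\<not> ?thesis"
  then have "\<forall>x \<in> snd ` set w0. dist_Om \<Omega> (rho x) (\<phi> (f x)) < 1 / real (card \<Omega>)" by auto
  moreover have "\<phi> (f x) \<in> Bij \<Omega>" if "x \<in> snd ` set w0" for x
    using assms(2,5) that by (auto simp: hom_def)
  ultimately have "rho x = \<phi> (f x)" if "x \<in> snd ` set w0" for x
    using dist_Om_less_inverse_card rho_Bij that by blast
  then have "word_eval (BijGroup \<Omega>) rho w0 = word_eval (BijGroup \<Omega>) (\<lambda>x. \<phi> (f x)) w0"
    by (intro word_eval_cong) auto
  also have "\<dots> = \<phi> (word_eval G f w0)"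
    using group_hom.word_eval_hom[OF \<phi>] assms(2) by blast
  also have "\<dots> = \<one>\<^bsub>BijGroup \<Omega>\<^esub>"
    using group_hom.hom_one[OF \<phi>] assms(3) by simp
  finally have "word_eval (BijGroup \<Omega>) rho w0 n = n" using length_less by (simp add: one_BijGroup)
  then show False using word_eval_drop_rho[of 0] assms(4) by simp
qed

lemma valid_pair_far_relator:
  assumes G: "group G" and f: "f ` X \<subseteq> carrier G"
    and w0: "w0 \<in> ker_free G X f" "w0 \<noteq> []"
    and V: "valid_pair G X f \<epsilon> \<delta> E" and \<epsilon>: "\<epsilon> \<le> 1 / real N"
  shows "\<exists>r \<in> E. r \<noteq> [] \<and> \<delta> \<le> dist_Om \<Omega> (word_eval (BijGroup \<Omega>) rho r) id"
proof -
  have w0X: "snd ` set w0 \<subseteq> X" and w0_ker: "word_eval G f w0 = \<one>\<^bsub>G\<^esub>"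
    using w0(1) by (auto simp: ker_free_def free_elems_def)
  have "\<not> (\<forall>r \<in> E. dist_Om \<Omega> (word_eval (BijGroup \<Omega>) rho r) id < \<delta>)"
  proof
    assume "\<forall>r \<in> E. dist_Om \<Omega> (word_eval (BijGroup \<Omega>) rho r) id < \<delta>"
    then obtain \<phi> where \<phi>: "\<phi> \<in> hom G (BijGroup \<Omega>)" "\<forall>x \<in> X. dist_Om \<Omega> (rho x) (\<phi> (f x)) < \<epsilon>"
      using V rho_Bij unfolding valid_pair_def by blast
    then show False
      using not_close_to_hom[OF G _ w0_ker w0(2) \<phi>(1)] w0X f \<epsilon> by fastforce
  qed
  then obtain r where r: "r \<in> E" "\<delta> \<le> dist_Om \<Omega> (word_eval (BijGroup \<Omega>) rho r) id"
    by (auto simp: not_less)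
  moreover have "r \<noteq> []"
  proof
    assume "r = []"
    then have "dist_Om \<Omega> (word_eval (BijGroup \<Omega>) rho r) id = 0"
      by (simp add: dist_Om_def one_BijGroup cong: conj_cong)
    then show False using r(2) V by (simp add: valid_pair_def)
  qed
  ultimately show ?thesis by blast
qed

end

lemma valid_pair_lower_bound:
  fixes X :: "'x set"
  assumes G: "group G" and f: "f ` X \<subseteq> carrier G"
    and w0: "w0 \<in> ker_free G X f" "w0 \<noteq> []"
    and V: "valid_pair G X f \<epsilon> \<delta> E" and \<epsilon>: "0 < \<epsilon>" "2 * (real (length w0) + 1) * \<epsilon> \<le> 1"
  shows "\<delta> < 2 * (real (length w0) + 1) * \<epsilon> \<and> 1 \<le> word_norm E"
proof -
  define y where "y = 1 / \<epsilon>"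
  \<comment> \<open>on \<open>N\<close> points \<open>\<epsilon>\<close>-closeness forces equality, while words move at most \<open>length w0 + 1\<close> points\<close>
  define N where "N = nat \<lfloor>y\<rfloor>"
  have "real N = of_int \<lfloor>y\<rfloor>" unfolding N_def y_def using \<epsilon>(1) by simp
  then have N: "real N \<le> y" "y - 1 < real N"
    using of_int_floor_le[of y] real_of_int_floor_add_one_gt[of y] by linarith+
  have "2 * (real (length w0) + 1) \<le> y" unfolding y_def using \<epsilon> by (simp add: field_simps)
  then have "real (length w0) < real N" "y < 2 * real N" using N(2) by simp_all
  then have len: "length w0 < N" and "1 < 2 * \<epsilon> * real N"
    using \<epsilon>(1) by (simp_all add: y_def divide_less_eq mult_ac)
  interpret reduced_path w0 N
    using w0(1) len by unfold_locales (simp add: ker_free_def free_elems_def)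
  have "\<epsilon> \<le> 1 / real N" using N(1) len \<epsilon>(1) by (simp add: y_def field_simps)
  then obtain r where r: "r \<in> E" "r \<noteq> []" "\<delta> \<le> dist_Om \<Omega> (word_eval (BijGroup \<Omega>) rho r) id"
    using valid_pair_far_relator[OF G f w0 V] by blast
  have "real (Suc (length w0)) * 1 < real (Suc (length w0)) * (2 * \<epsilon> * real N)"
    using \<open>1 < 2 * \<epsilon> * real N\<close> by (intro mult_strict_left_mono) simp_all
  then have "real (Suc (length w0)) / real N < 2 * (real (length w0) + 1) * \<epsilon>"
    using len by (simp add: pos_divide_less_eq algebra_simps)
  then have "\<delta> < 2 * (real (length w0) + 1) * \<epsilon>"
    using r(3) dist_Om_word_eval_rho[of r] by linarith
  moreover have "1 \<le> word_norm E"
    using r(1,2) V member_le_sum[of r E length] by (cases r) (auto simp: word_norm_def valid_pair_def)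
  ultimately show ?thesis by blast
qed

section \<open>Change of generating set\<close>

locale presentation_pair =
  fixes G :: "('g, 'm) monoid_scheme"
    and X1 :: "'a set" and f1 :: "'a \<Rightarrow> 'g"
    and X2 :: "'b set" and f2 :: "'b \<Rightarrow> 'g"
  assumes group: "group G"
    and finite1: "finite X1" and epi1: "is_epi G X1 f1"
    and finite2: "finite X2" and epi2: "is_epi G X2 f2"
begin

definition w12 :: "'a \<Rightarrow> (bool \<times> 'b) list" where "w12 x = preimage_word G X2 f2 (f1 x)"
definition w21 :: "'b \<Rightarrow> (bool \<times> 'a) list" where "w21 x = preimage_word G X1 f1 (f2 x)"

lemma w12: "x \<in> X1 \<Longrightarrow> snd ` set (w12 x) \<subseteq> X2 \<and> word_eval G f2 (w12 x) = f1 x"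
  unfolding w12_def using preimage_word[OF epi2] is_epi_closed[OF epi1] by blast

lemma w21: "x \<in> X2 \<Longrightarrow> snd ` set (w21 x) \<subseteq> X1 \<and> word_eval G f1 (w21 x) = f2 x"
  unfolding w21_def using preimage_word[OF epi1] is_epi_closed[OF epi2] by blast

definition L12 :: nat where "L12 = (\<Sum>x \<in> X1. length (w12 x))"
definition L21 :: nat where "L21 = (\<Sum>x \<in> X2. length (w21 x))"
definition K :: nat where "K = card X2 + L12 * L21"

lemma length_w12_le: "x \<in> X1 \<Longrightarrow> length (w12 x) \<le> L12"
  unfolding L12_def using finite1 by (intro member_le_sum) auto

lemma length_w21_le: "x \<in> X2 \<Longrightarrow> length (w21 x) \<le> L21"
  unfolding L21_def using finite2 by (intro member_le_sum) auto

definition translate :: "(bool \<times> 'a) list \<Rightarrow> (bool \<times> 'b) list" where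
  "translate r = reduce (word_subst w12 r)"

definition back_relator :: "'b \<Rightarrow> (bool \<times> 'b) list" where
  "back_relator x = reduce ((False, x) # word_subst w12 (w21 x))"

definition relators2 :: "(bool \<times> 'a) list set \<Rightarrow> (bool \<times> 'b) list set" where
  "relators2 E = translate ` E \<union> back_relator ` X2"

lemma snd_set_word_subst_w12: "snd ` set r \<subseteq> X1 \<Longrightarrow> snd ` set (word_subst w12 r) \<subseteq> X2"
  unfolding snd_set_word_subst using w12 by blast

lemma length_word_subst_w12: "snd ` set r \<subseteq> X1 \<Longrightarrow> length (word_subst w12 r) \<le> length r * L12"
  using length_w12_le by (intro length_word_subst_le) auto

lemma word_eval_word_subst_w12:
  assumes "group H" "\<rho> ` X2 \<subseteq> carrier H" "snd ` set r \<subseteq> X1"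
  shows "word_eval H \<rho> (word_subst w12 r) = word_eval H (\<lambda>x. word_eval H \<rho> (w12 x)) r"
  using assms w12 by (intro group.word_eval_word_subst) fastforce+

lemma word_eval_translate:
  assumes "group H" "\<rho> ` X2 \<subseteq> carrier H" "snd ` set r \<subseteq> X1"
  shows "word_eval H \<rho> (translate r) = word_eval H (\<lambda>x. word_eval H \<rho> (w12 x)) r"
proof -
  have "\<rho> ` snd ` set (word_subst w12 r) \<subseteq> carrier H"
    using snd_set_word_subst_w12[OF assms(3)] assms(2) by blast
  then show ?thesis
    unfolding translate_def
    using group.word_eval_reduce[OF assms(1)] word_eval_word_subst_w12[OF assms] by metis
qed

lemma word_eval_translate_G:
  assumes "snd ` set r \<subseteq> X1"
  shows "word_eval G f2 (translate r) = word_eval G f1 r"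
proof -
  have "word_eval G f2 (translate r) = word_eval G (\<lambda>x. word_eval G f2 (w12 x)) r"
    by (rule word_eval_translate[OF group is_epi_closed[OF epi2] assms])
  also have "\<dots> = word_eval G f1 r"
    using assms w12 by (intro word_eval_cong) auto
  finally show ?thesis .
qed

lemma back_relator_eval:
  assumes "group H" "\<rho> ` X2 \<subseteq> carrier H" "x \<in> X2"
  shows "word_eval H \<rho> (back_relator x)
    = inv\<^bsub>H\<^esub> (\<rho> x) \<otimes>\<^bsub>H\<^esub> word_eval H (\<lambda>y. word_eval H \<rho> (w12 y)) (w21 x)"
proof -
  have "\<rho> ` snd ` set ((False, x) # word_subst w12 (w21 x)) \<subseteq> carrier H"
    using snd_set_word_subst_w12 w21 assms(2,3) by fastforce
  then have "word_eval H \<rho> (back_relator x) = word_eval H \<rho> ((False, x) # word_subst w12 (w21 x))"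
    unfolding back_relator_def by (rule group.word_eval_reduce[OF assms(1)])
  then show ?thesis
    using word_eval_word_subst_w12[OF assms(1,2)] w21[OF assms(3)] by simp
qed

lemma relators2_ker:
  assumes "E \<subseteq> ker_free G X1 f1"
  shows "relators2 E \<subseteq> ker_free G X2 f2"
proof
  fix t assume "t \<in> relators2 E"
  then consider r where "r \<in> E" "t = translate r" | x where "x \<in> X2" "t = back_relator x"
    unfolding relators2_def by blast
  then show "t \<in> ker_free G X2 f2"
  proof cases
    case 1
    then have "r \<in> free_elems X1" and r1: "word_eval G f1 r = \<one>\<^bsub>G\<^esub>"
      using assms by (auto simp: ker_free_def)
    then have r: "snd ` set r \<subseteq> X1" "word_eval G f1 r = \<one>\<^bsub>G\<^esub>"
      by (simp_all add: free_elems_letters)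
    then show ?thesis
      using 1 word_eval_translate_G[OF r(1)] reduce_in_free_elems[OF snd_set_word_subst_w12]
      by (simp add: ker_free_def translate_def)
  next
    case 2
    have "word_eval G (\<lambda>y. word_eval G f2 (w12 y)) (w21 x) = word_eval G f1 (w21 x)"
      using w12 w21[OF 2(1)] by (intro word_eval_cong) auto
    then have "word_eval G f2 t = inv\<^bsub>G\<^esub> (f2 x) \<otimes>\<^bsub>G\<^esub> word_eval G f1 (w21 x)"
      using back_relator_eval[OF group is_epi_closed[OF epi2] 2(1)] 2(2) by simp
    also have "\<dots> = \<one>\<^bsub>G\<^esub>"
      using w21 2(1) is_epi_closed[OF epi2] group.l_inv[OF group] by auto
    finally have "word_eval G f2 t = \<one>\<^bsub>G\<^esub>" .
    moreover have "t \<in> free_elems X2"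
      unfolding 2(2) back_relator_def using 2(1) snd_set_word_subst_w12 w21
      by (intro reduce_in_free_elems) auto
    ultimately show ?thesis by (simp add: ker_free_def)
  qed
qed

lemma word_norm_relators2:
  assumes "finite E" "E \<subseteq> free_elems X1"
  shows "word_norm (relators2 E) \<le> L12 * word_norm E + K"
proof -
  have "word_norm (translate ` E) \<le> (\<Sum>r \<in> E. L12 * length r)"
  proof (rule word_norm_relator_set_le[OF assms(1)], intro ballI)
    fix r assume "r \<in> E"
    then have "snd ` set r \<subseteq> X1" using assms(2) free_elems_letters[of r X1] by auto
    then have "length (word_subst w12 r) \<le> length r * L12" by (rule length_word_subst_w12)
    then show "length (translate r) \<le> L12 * length r"
      unfolding translate_def using length_reduce[of "word_subst w12 r"] by (simp add: mult.commute)
  qed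
  moreover have "word_norm (back_relator ` X2) \<le> (\<Sum>x \<in> X2. 1 + L12 * length (w21 x))"
  proof (rule word_norm_relator_set_le[OF finite2], intro ballI)
    fix x assume "x \<in> X2"
    then have "length (word_subst w12 (w21 x)) \<le> length (w21 x) * L12"
      using w21 length_word_subst_w12 by blast
    then show "length (back_relator x) \<le> 1 + L12 * length (w21 x)"
      unfolding back_relator_def using length_reduce[of "(False, x) # word_subst w12 (w21 x)"]
      by (simp add: mult.commute)
  qed
  moreover have "word_norm (relators2 E) \<le> word_norm (translate ` E) + word_norm (back_relator ` X2)"
    unfolding relators2_def word_norm_def using assms(1) finite2 by (simp add: sum_Un_nat)
  moreover have "(\<Sum>x \<in> X2. 1 + L12 * length (w21 x)) = K"
    by (simp add: K_def L21_def sum_Suc sum_distrib_left)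
  moreover have "(\<Sum>r \<in> E. L12 * length r) = L12 * word_norm E"
    by (simp add: word_norm_def sum_distrib_left)
  ultimately show ?thesis by linarith
qed

lemma pullback_Bij:
  assumes "\<rho> ` X2 \<subseteq> Bij \<Omega>"
  shows "(\<lambda>y. word_eval (BijGroup \<Omega>) \<rho> (w12 y)) ` X1 \<subseteq> Bij \<Omega>"
proof -
  interpret B: group "BijGroup \<Omega>" by (rule group_BijGroup)
  have "word_eval (BijGroup \<Omega>) \<rho> (w12 y) \<in> Bij \<Omega>" if "y \<in> X1" for y
    using w12[OF that] assms B.word_eval_closed[of \<rho> "w12 y"] by auto
  then show ?thesis by blast
qed

lemma dist_Om_back_relator:
  assumes "\<rho> ` X2 \<subseteq> Bij \<Omega>" "x \<in> X2"
  shows "dist_Om \<Omega> (\<rho> x) (word_eval (BijGroup \<Omega>) (\<lambda>y. word_eval (BijGroup \<Omega>) \<rho> (w12 y)) (w21 x))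
    = dist_Om \<Omega> (word_eval (BijGroup \<Omega>) \<rho> (back_relator x)) id"
proof -
  interpret B: group "BijGroup \<Omega>" by (rule group_BijGroup)
  have "(\<lambda>y. word_eval (BijGroup \<Omega>) \<rho> (w12 y)) ` snd ` set (w21 x) \<subseteq> Bij \<Omega>"
    using pullback_Bij[OF assms(1)] w21[OF assms(2)] by blast
  then have "word_eval (BijGroup \<Omega>) (\<lambda>y. word_eval (BijGroup \<Omega>) \<rho> (w12 y)) (w21 x) \<in> Bij \<Omega>"
    using B.word_eval_closed by simp
  moreover have "\<rho> x \<in> Bij \<Omega>" using assms by blast
  ultimately show ?thesis
    using back_relator_eval[OF group_BijGroup _ assms(2), of \<rho>] assms(1)
      dist_Om_inv_mult_id[OF \<open>\<rho> x \<in> Bij \<Omega>\<close>] by simp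
qed

lemma valid_pair_relators2:
  assumes V: "valid_pair G X1 f1 \<epsilon>1 \<delta> E" and \<epsilon>: "0 < \<epsilon>" "0 < \<epsilon>1" "real L21 * \<epsilon>1 \<le> \<epsilon> / 2"
  shows "valid_pair G X2 f2 \<epsilon> (min \<delta> (\<epsilon> / 2)) (relators2 E)"
  unfolding valid_pair_def
proof (intro conjI allI impI)
  show "relators2 E \<subseteq> ker_free G X2 f2" using V relators2_ker by (simp add: valid_pair_def)
  show "finite (relators2 E)" using V finite2 by (simp add: valid_pair_def relators2_def)
next
  fix \<Omega> :: "nat set" and \<rho> :: "'b \<Rightarrow> nat \<Rightarrow> nat"
  assume \<Omega>: "finite \<Omega>" and "\<forall>x \<in> X2. \<rho> x \<in> Bij \<Omega>"
    and rel: "\<forall>t \<in> relators2 E. dist_Om \<Omega> (word_eval (BijGroup \<Omega>) \<rho> t) id < min \<delta> (\<epsilon> / 2)"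
  then have \<rho>: "\<rho> ` X2 \<subseteq> Bij \<Omega>" by blast
  define \<rho>1 where "\<rho>1 y = word_eval (BijGroup \<Omega>) \<rho> (w12 y)" for y
  have \<rho>1: "\<rho>1 ` X1 \<subseteq> Bij \<Omega>" unfolding \<rho>1_def by (rule pullback_Bij[OF \<rho>])
  have "dist_Om \<Omega> (word_eval (BijGroup \<Omega>) \<rho>1 r) id < \<delta>" if "r \<in> E" for r
  proof -
    have "snd ` set r \<subseteq> X1" using valid_pair_free_elems[OF V] that free_elems_letters by blast
    then have "word_eval (BijGroup \<Omega>) \<rho> (translate r) = word_eval (BijGroup \<Omega>) \<rho>1 r"
      unfolding \<rho>1_def using \<rho> by (intro word_eval_translate[OF group_BijGroup]) simp_all
    moreover have "translate r \<in> relators2 E" using that by (simp add: relators2_def)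
    ultimately show ?thesis using rel by (metis min_less_iff_conj)
  qed
  then obtain \<phi> where \<phi>: "\<phi> \<in> hom G (BijGroup \<Omega>)" and close1: "\<forall>y \<in> X1. dist_Om \<Omega> (\<rho>1 y) (\<phi> (f1 y)) < \<epsilon>1"
    using V \<Omega> \<rho>1 unfolding valid_pair_def by blast
  have "dist_Om \<Omega> (\<rho> x) (\<phi> (f2 x)) < \<epsilon>" if x: "x \<in> X2" for x
  proof -
    let ?A = "word_eval (BijGroup \<Omega>) \<rho>1 (w21 x)"
    have "dist_Om \<Omega> (\<rho> x) ?A < \<epsilon> / 2"
      using dist_Om_back_relator[OF \<rho> x] rel x unfolding \<rho>1_def by (simp add: relators2_def)
    moreover have "dist_Om \<Omega> ?A (\<phi> (f2 x)) \<le> real (length (w21 x)) * \<epsilon>1"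
      using dist_Om_word_eval_hom[OF \<Omega> group \<phi>, of f1 "w21 x" \<rho>1 \<epsilon>1] w21[OF x] close1 \<rho>1
        is_epi_closed[OF epi1] by fastforce
    moreover have "real (length (w21 x)) * \<epsilon>1 \<le> real L21 * \<epsilon>1"
      using length_w21_le[OF x] \<epsilon>(2) by (intro mult_right_mono) simp_all
    ultimately show ?thesis
      using dist_Om_triangle[OF \<Omega>, of "\<rho> x" "\<phi> (f2 x)" ?A] \<epsilon>(3) by linarith
  qed
  with \<phi> show "\<exists>\<phi> \<in> hom G (BijGroup \<Omega>). \<forall>x \<in> X2. dist_Om \<Omega> (\<rho> x) (\<phi> (f2 x)) < \<epsilon>" by blast
qed (use V \<epsilon> in \<open>auto simp: valid_pair_def\<close>)

lemma small_eps1_exists: "0 < \<epsilon> \<Longrightarrow> \<exists>\<epsilon>1 > 0. real L21 * \<epsilon>1 \<le> \<epsilon> / 2"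
proof (intro exI[of _ "\<epsilon> / (2 * (real L21 + 1))"] conjI)
  assume "0 < \<epsilon>"
  then have "real L21 * (\<epsilon> / (2 * (real L21 + 1))) \<le> (real L21 + 1) * (\<epsilon> / (2 * (real L21 + 1)))"
    by (intro mult_right_mono) simp_all
  also have "\<dots> = \<epsilon> / 2"
    using of_nat_0_le_iff[of L21, where 'a=real] by (simp add: field_simps)
  finally show "real L21 * (\<epsilon> / (2 * (real L21 + 1))) \<le> \<epsilon> / 2" .
qed simp

lemma stable_wrt2: "stable_wrt G X1 f1 \<Longrightarrow> stable_wrt G X2 f2"
  unfolding stable_wrt_def
proof (intro allI impI)
  fix \<epsilon> :: real
  assume "\<forall>\<epsilon>1 > 0. \<exists>\<delta> E. valid_pair G X1 f1 \<epsilon>1 \<delta> E" and \<epsilon>: "0 < \<epsilon>"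
  moreover obtain \<epsilon>1 where "0 < \<epsilon>1" "real L21 * \<epsilon>1 \<le> \<epsilon> / 2" using small_eps1_exists[OF \<epsilon>] by blast
  ultimately show "\<exists>\<delta> E. valid_pair G X2 f2 \<epsilon> \<delta> E" using valid_pair_relators2 by blast
qed

lemma stab_fun2_le:
  assumes V: "valid_pair G X1 f1 \<epsilon>1 \<delta> E" and "0 < \<epsilon>1" "0 < x" "real L21 * \<epsilon>1 \<le> 1 / (2 * x)"
  shows "stab_fun G X2 f2 x \<le> real (L12 * word_norm E + K) / min \<delta> (1 / (2 * x))"
proof -
  have "valid_pair G X2 f2 (1 / x) (min \<delta> (1 / (2 * x))) (relators2 E)"
    using valid_pair_relators2[OF V, of "1 / x"] assms(2-4) by (simp add: mult.commute)
  then have "stab_fun G X2 f2 x \<le> real (word_norm (relators2 E)) / min \<delta> (1 / (2 * x))"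
    by (rule stab_fun_le)
  also have "\<dots> \<le> real (L12 * word_norm E + K) / min \<delta> (1 / (2 * x))"
  proof (rule divide_right_mono[OF of_nat_mono])
    show "word_norm (relators2 E) \<le> L12 * word_norm E + K"
      using word_norm_relators2 valid_pair_free_elems[OF V] V by (simp add: valid_pair_def)
    show "0 \<le> min \<delta> (1 / (2 * x))" using V assms(3) by (simp add: valid_pair_def)
  qed
  finally show ?thesis .
qed

lemma stab_fun2_linear:
  assumes "is_iso G X1 f1"
  shows "\<exists>C \<ge> 1. \<forall>x \<ge> 1. stab_fun G X2 f2 x \<le> C * x"
proof (intro exI[of _ "2 * real K + 1"] conjI allI impI)
  fix x :: real assume x: "1 \<le> x"
  obtain \<epsilon>1 where \<epsilon>1: "0 < \<epsilon>1" "real L21 * \<epsilon>1 \<le> 1 / (2 * x)"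
    using small_eps1_exists[of "1 / x"] x by auto
  have V: "valid_pair G X1 f1 \<epsilon>1 1 {}" by (rule valid_pair_of_is_iso[OF group assms \<epsilon>1(1)])
  have "stab_fun G X2 f2 x \<le> real K / min 1 (1 / (2 * x))"
    using stab_fun2_le[OF V \<epsilon>1(1) _ \<epsilon>1(2)] x by (simp add: word_norm_def)
  also have "\<dots> = 2 * real K * x" using x by (simp add: min_def field_simps)
  also have "\<dots> \<le> (2 * real K + 1) * x" using x by (simp add: algebra_simps)
  finally show "stab_fun G X2 f2 x \<le> (2 * real K + 1) * x" .
qed simp

lemma stab_fun2_le_norm:
  assumes w0: "w0 \<in> ker_free G X1 f1" "w0 \<noteq> []" and x: "1 \<le> x"
    and C: "4 * (real (length w0) + 1) \<le> C" "2 * real L21 \<le> C" "real L12 + real K \<le> C"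
    and V: "valid_pair G X1 f1 (1 / (C * x)) \<delta> E"
  shows "stab_fun G X2 f2 x \<le> C * real (word_norm E) / \<delta>"
proof -
  have "0 < C" using C(1) by (smt (verit) of_nat_0_le_iff)
  then have small: "a * (1 / (C * x)) \<le> 1 / (2 * x)" if "2 * a \<le> C" for a
    using that x by (simp add: field_simps)
  have le: "2 * (real (length w0) + 1) * (1 / (C * x)) \<le> 1 / (2 * x)"
    "real L21 * (1 / (C * x)) \<le> 1 / (2 * x)"
    using small C(1,2) by simp_all
  have "\<delta> < 2 * (real (length w0) + 1) * (1 / (C * x)) \<and> 1 \<le> word_norm E"
  proof (rule valid_pair_lower_bound[OF group is_epi_closed[OF epi1] w0 V])
    show "0 < 1 / (C * x)" using \<open>0 < C\<close> x by simp
    have "1 / (2 * x) \<le> 1" using x by simp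
    then show "2 * (real (length w0) + 1) * (1 / (C * x)) \<le> 1" using le(1) by linarith
  qed
  then have "\<delta> < 1 / (2 * x)" and E: "1 \<le> word_norm E" using le(1) by auto
  then have "stab_fun G X2 f2 x \<le> real (L12 * word_norm E + K) / \<delta>"
    using stab_fun2_le[OF V _ _ le(2)] \<open>0 < C\<close> x by simp
  also have "\<dots> \<le> C * real (word_norm E) / \<delta>"
  proof (rule divide_right_mono)
    have "real K \<le> real K * real (word_norm E)"
      using E mult_left_mono[of 1 "real (word_norm E)" "real K"] by simp
    then have "real (L12 * word_norm E + K) \<le> (real L12 + real K) * real (word_norm E)"
      by (simp add: algebra_simps)
    also have "\<dots> \<le> C * real (word_norm E)" using C(3) by (simp add: mult_right_mono)
    finally show "real (L12 * word_norm E + K) \<le> C * real (word_norm E)" .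
  qed (use V in \<open>simp add: valid_pair_def\<close>)
  finally show ?thesis .
qed

lemma stab_fun2_le_stab_fun1:
  assumes stable: "stable_wrt G X1 f1" and not_iso: "\<not> is_iso G X1 f1"
  shows "\<exists>C \<ge> 1. \<forall>x \<ge> 1. stab_fun G X2 f2 x \<le> C * stab_fun G X1 f1 (C * x)"
proof -
  obtain w0 where w0: "w0 \<in> ker_free G X1 f1" "w0 \<noteq> []"
    using not_iso epi1 by (auto simp: is_iso_def ker_free_def)
  define C where "C = 4 * (real (length w0) + 1) + 2 * real L21 + real L12 + real K"
  have C: "1 \<le> C" "4 * (real (length w0) + 1) \<le> C" "2 * real L21 \<le> C" "real L12 + real K \<le> C"
    unfolding C_def by auto
  have "stab_fun G X2 f2 x \<le> C * stab_fun G X1 f1 (C * x)" if x: "1 \<le> x" for x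
  proof -
    have "stab_fun G X2 f2 x / C \<le> stab_fun G X1 f1 (C * x)"
    proof (rule le_stab_fun)
      show "\<exists>\<delta> E. valid_pair G X1 f1 (1 / (C * x)) \<delta> E"
        using stable C(1) x unfolding stable_wrt_def by simp
    next
      fix \<delta> E assume "valid_pair G X1 f1 (1 / (C * x)) \<delta> E"
      then show "stab_fun G X2 f2 x / C \<le> real (word_norm E) / \<delta>"
        using stab_fun2_le_norm[OF w0 x C(2-4)] C(1) by (simp add: field_simps)
    qed
    then show ?thesis using C(1) by (simp add: field_simps)
  qed
  then show ?thesis using C(1) by blast
qed

end

theorem proposition2p5:
  fixes G :: "('g, 'm) monoid_scheme"
    and X1 :: "'a set" and f1 :: "'a \<Rightarrow> 'g"
    and X2 :: "'b set" and f2 :: "'b \<Rightarrow> 'g"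
  assumes "group G"
    and "finite X1" and "is_epi G X1 f1"
    and "finite X2" and "is_epi G X2 f2"
    and "stable_wrt G X1 f1"
  shows "stable_wrt G X2 f2 \<and>
    (\<exists>C0 :: real. C0 \<ge> 1 \<and>
      (\<forall>x :: real. x \<ge> 1 \<longrightarrow>
        (is_iso G X1 f1 \<longrightarrow> stab_fun G X2 f2 x \<le> C0 * x) \<and>
        (\<not> is_iso G X1 f1 \<longrightarrow> stab_fun G X2 f2 x \<le> C0 * stab_fun G X1 f1 (C0 * x))))"
proof -
  interpret presentation_pair G X1 f1 X2 f2
    using assms(1-5) by (simp add: presentation_pair_def)
  have "\<exists>C0 \<ge> 1. \<forall>x \<ge> 1. (is_iso G X1 f1 \<longrightarrow> stab_fun G X2 f2 x \<le> C0 * x) \<and>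
      (\<not> is_iso G X1 f1 \<longrightarrow> stab_fun G X2 f2 x \<le> C0 * stab_fun G X1 f1 (C0 * x))"
  proof (cases "is_iso G X1 f1")
    case True
    then show ?thesis using stab_fun2_linear by simp
  next
    case False
    then show ?thesis using stab_fun2_le_stab_fun1[OF assms(6)] by simp
  qed
  then show ?thesis using stable_wrt2[OF assms(6)] by blast
qed

end
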